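(* Every finite word accepted by $\widehat{\mathcal{T}_{p/q}}$ (i.e. labelling a path starting at state $0$) is a prefix of a span-word $M_n\ominus\mu_n$ for some $n\in\mathbb{N}$.
   Context: Let $p>q>1$ be coprime integers, $A_p=\{0,\dots,p-1\}$, $A_q=\{0,\dots,q-1\}$ and $B=\{p-(2q-1),\dots,p-1\}$. For $n\in\mathbb{N}$ and $a\in\mathbb{Z}$, let $\tau(n,a)=\frac{np+a}{q}$, defined only when $q$ divides $np+a$. Let $\mathcal{T}_{p/q}$ be the deterministic automaton with state set $\mathbb{N}$, alphabet $A_p$, initial state $0$, and transitions $n\xrightarrow{a}\tau(n,a)$ for $a\in A_p$ with $\tau(n,a)$ defined. The minimal word $\mu_n\in A_q^{\omega}$ (resp. maximal word $M_n\in\{p-q,\dots,p-1\}^{\omega}$) is the unique infinite word over $A_q$ (resp. over $\{p-q,\dots,p-1\}$) labelling a path of $\mathcal{T}_{p/q}$ starting at $n$. The span-word of $n$ is $M_n\ominus\mu_n$, with $\ominus$ letter-wise subtraction. Let $\widehat{\mathcal{T}_{p/q}}$ be the deterministic automaton with state set $\mathbb{N}$, alphabet $B$, initial state $0$, and transitions $n\xrightarrow{a}\tau(n,a)$ for $a\in B$ with $\tau(n,a)$ defined. *)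

theory Defs
  imports Main
begin

(* Transition n --a--> m of T_{p/q}: m = tau(n,a) = (n p + a)/q, defined iff q divides n p + a;
   states are natural numbers, so the target must be a natural number. Letters are integers. *)
definition trans :: "nat \<Rightarrow> nat \<Rightarrow> nat \<Rightarrow> int \<Rightarrow> nat \<Rightarrow> bool" where
  "trans p q n a m \<longleftrightarrow> int q * int m = int n * int p + a"

definition A_p :: "nat \<Rightarrow> int set" where "A_p p = {0..int p - 1}"
definition A_q :: "nat \<Rightarrow> int set" where "A_q q = {0..int q - 1}"
definition Amax :: "nat \<Rightarrow> nat \<Rightarrow> int set" where "Amax p q = {int p - int q..int p - 1}"
definition B :: "nat \<Rightarrow> nat \<Rightarrow> int set" where "B p q = {int p - (2 * int q - 1)..int p - 1}"

fun fpath :: "nat \<Rightarrow> nat \<Rightarrow> nat \<Rightarrow> int list \<Rightarrow> bool" where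
  "fpath p q n [] = True"
| "fpath p q n (a # u) = (\<exists>m. trans p q n a m \<and> fpath p q m u)"

definition ipath :: "nat \<Rightarrow> nat \<Rightarrow> nat \<Rightarrow> (nat \<Rightarrow> int) \<Rightarrow> bool" where
  "ipath p q n w \<longleftrightarrow> (\<exists>s. s 0 = n \<and> (\<forall>i. trans p q (s i) (w i) (s (Suc i))))"

definition minword :: "nat \<Rightarrow> nat \<Rightarrow> nat \<Rightarrow> (nat \<Rightarrow> int)" where
  "minword p q n = (THE w. (\<forall>i. w i \<in> A_q q) \<and> ipath p q n w)"

definition maxword :: "nat \<Rightarrow> nat \<Rightarrow> nat \<Rightarrow> (nat \<Rightarrow> int)" where
  "maxword p q n = (THE w. (\<forall>i. w i \<in> Amax p q) \<and> ipath p q n w)"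

definition spanword :: "nat \<Rightarrow> nat \<Rightarrow> nat \<Rightarrow> (nat \<Rightarrow> int)" where
  "spanword p q n = (\<lambda>i. maxword p q n i - minword p q n i)"

definition accepted_hat :: "nat \<Rightarrow> nat \<Rightarrow> int list \<Rightarrow> bool" where
  "accepted_hat p q u \<longleftrightarrow> set u \<subseteq> B p q \<and> fpath p q 0 u"

end

theory Submission
  imports Defs
begin

text \<open>
  From a state of \<open>T\<^sub>p\<^sub>/\<^sub>q\<close> there is exactly one outgoing transition whose letter lies in a given
  window of q consecutive integers, so a path whose letters stay in such a window is determined
  by its start; this identifies \<open>\<mu>\<^sub>n\<close> and \<open>M\<^sub>n\<close> with the paths in the windows \<open>A\<^sub>q\<close> and
  \<open>{p-q..p-1}\<close>. Transitions add up, so if \<open>u\<close> labels a path from 0 and \<open>w\<close> labels a path from \<open>n\<close>,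
  then \<open>w + u\<close> labels a path from \<open>n\<close>. For \<open>u\<close> over \<open>B\<close> choose \<open>w\<^sub>i = max 0 (p - q - u\<^sub>i) \<in> A\<^sub>q\<close>:
  then \<open>w + u\<close> lies in \<open>{p-q..p-1}\<close>. Since p and q are coprime, every finite word labels a path
  from some state, so some \<open>n\<close> starts a path labelled \<open>w\<close>; then \<open>\<mu>\<^sub>n\<close> begins with \<open>w\<close> and \<open>M\<^sub>n\<close> with
  \<open>w + u\<close>, and the span-word of \<open>n\<close> begins with \<open>u\<close>.
\<close>

lemma trans_add:
  assumes "trans p q n a m" "trans p q n' a' m'"
  shows "trans p q (n + n') (a + a') (m + m')"
  using assms unfolding trans_def by (simp add: algebra_simps)

lemma trans_window_unique:
  assumes "trans p q n a m" "trans p q n b m'"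
    and "a \<in> {lo..<lo + int q}" "b \<in> {lo..<lo + int q}"
  shows "a = b \<and> m = m'"
proof -
  have diff: "int q * (int m - int m') = a - b"
    using assms(1,2) unfolding trans_def by (simp add: algebra_simps)
  have "int m = int m'"
  proof (rule ccontr)
    assume "int m \<noteq> int m'"
    then have "1 \<le> \<bar>int m - int m'\<bar>" by linarith
    then have "int q \<le> \<bar>int q * (int m - int m')\<bar>"
      using mult_left_mono[of 1 "\<bar>int m - int m'\<bar>" "int q"] by (simp add: abs_mult)
    with diff assms(3,4) show False by auto
  qed
  with diff show ?thesis by simp
qed

definition window_letter :: "nat \<Rightarrow> nat \<Rightarrow> int \<Rightarrow> nat \<Rightarrow> int" where
  "window_letter p q lo n = lo + (- (int n * int p) - lo) mod int q"

definition window_succ :: "nat \<Rightarrow> nat \<Rightarrow> int \<Rightarrow> nat \<Rightarrow> nat" where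
  "window_succ p q lo n = nat ((int n * int p + window_letter p q lo n) div int q)"

definition window_word :: "nat \<Rightarrow> nat \<Rightarrow> int \<Rightarrow> nat \<Rightarrow> nat \<Rightarrow> int" where
  "window_word p q lo n i = window_letter p q lo ((window_succ p q lo ^^ i) n)"

lemma window_letter_in_window:
  assumes "q > 0"
  shows "window_letter p q lo n \<in> {lo..<lo + int q}"
  using assms unfolding window_letter_def by simp

lemma trans_window_succ:
  assumes "q > 0" "lo \<ge> 0"
  shows "trans p q n (window_letter p q lo n) (window_succ p q lo n)"
proof -
  let ?x = "int n * int p + window_letter p q lo n"
  have "?x mod int q = (int n * int p + lo + (- (int n * int p) - lo)) mod int q"
    unfolding window_letter_def by (metis add.assoc mod_add_right_eq)
  then have "int q dvd ?x" by (simp add: mod_0_imp_dvd)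
  moreover have "?x \<ge> 0"
    using window_letter_in_window[OF assms(1), of p lo n] assms(2) by simp
  ultimately have "int q * (?x div int q) = ?x" and "?x div int q \<ge> 0"
    using assms(1) by (simp_all add: pos_imp_zdiv_nonneg_iff)
  then show ?thesis
    unfolding trans_def window_succ_def by simp
qed

lemma window_word_eq_path_label:
  assumes "q > 0" "lo \<ge> 0" "s 0 = n"
    and path: "\<forall>i<L. trans p q (s i) (v i) (s (Suc i))"
    and window: "\<forall>i<L. v i \<in> {lo..<lo + int q}"
  shows "\<forall>i<L. window_word p q lo n i = v i"
proof -
  have step: "window_word p q lo n i = v i \<and> (window_succ p q lo ^^ Suc i) n = s (Suc i)"
    if "(window_succ p q lo ^^ i) n = s i" "i < L" for i
    using trans_window_unique[OF trans_window_succ[OF assms(1,2), of p "s i"] path[rule_format, OF \<open>i < L\<close>]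
        window_letter_in_window[OF assms(1)] window[rule_format, OF \<open>i < L\<close>]] that
    by (simp add: window_word_def)
  have "(window_succ p q lo ^^ i) n = s i" if "i \<le> L" for i
    using that
  proof (induction i)
    case (Suc i)
    then show ?case using step[of i] by simp
  qed (simp add: assms(3))
  then show ?thesis using step by simp
qed

lemma window_word_unique:
  assumes "q > 0" "lo \<ge> 0"
  shows "(\<forall>i. w i \<in> {lo..<lo + int q}) \<and> ipath p q n w \<longleftrightarrow> w = window_word p q lo n"
proof
  assume "(\<forall>i. w i \<in> {lo..<lo + int q}) \<and> ipath p q n w"
  then obtain s where "s 0 = n" "\<forall>i. trans p q (s i) (w i) (s (Suc i))"
    and "\<forall>i. w i \<in> {lo..<lo + int q}" unfolding ipath_def by blast
  then have "window_word p q lo n i = w i" for i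
    using window_word_eq_path_label[OF assms, of s n "Suc i"] by blast
  then show "w = window_word p q lo n" by auto
next
  assume "w = window_word p q lo n"
  then show "(\<forall>i. w i \<in> {lo..<lo + int q}) \<and> ipath p q n w"
    unfolding ipath_def window_word_def
    using window_letter_in_window[OF assms(1)] trans_window_succ[OF assms]
    by (auto intro!: exI[of _ "\<lambda>i. (window_succ p q lo ^^ i) n"])
qed

lemma minword_eq_window_word:
  assumes "q > 0"
  shows "minword p q n = window_word p q 0 n"
proof -
  have "A_q q = {0..<0 + int q}" unfolding A_q_def by auto
  then show ?thesis
    unfolding minword_def using window_word_unique[OF assms order_refl] by auto
qed

lemma maxword_eq_window_word:
  assumes "q > 0" "q \<le> p"
  shows "maxword p q n = window_word p q (int p - int q) n"
proof -
  have "Amax p q = {int p - int q..<(int p - int q) + int q}" unfolding Amax_def by auto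
  then show ?thesis
    unfolding maxword_def using window_word_unique[OF assms(1), of "int p - int q"] assms(2)
    by auto
qed

lemma fpath_imp_states:
  "fpath p q n u \<Longrightarrow> \<exists>s. s 0 = n \<and> (\<forall>i<length u. trans p q (s i) (u ! i) (s (Suc i)))"
proof (induction u arbitrary: n)
  case Nil
  then show ?case by auto
next
  case (Cons a u)
  then obtain m where "trans p q n a m" "fpath p q m u" by auto
  with Cons.IH obtain s where "s 0 = m" "\<forall>i<length u. trans p q (s i) (u ! i) (s (Suc i))"
    by blast
  with \<open>trans p q n a m\<close>
  have "\<forall>i<length (a # u). trans p q (case_nat n s i) ((a # u) ! i) (case_nat n s (Suc i))"
    by (auto simp: less_Suc_eq_0_disj)
  then show ?case by (intro exI[of _ "case_nat n s"]) simp
qed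

lemma coprime_nat_multiple:
  fixes p Q :: nat and b :: int
  assumes "coprime p Q" "p > 0" "Q > 0"
  shows "\<exists>n j :: nat. int n * int p + b = int Q * int j"
proof -
  obtain x y where xy: "x * int p + y * int Q = 1"
    using bezout_int[of "int p" "int Q"] assms(1) by auto
  then have "b * (x * int p) + b * (y * int Q) = b"
    by (metis distrib_left mult.right_neutral)
  then have base: "(- b * x) * int p + b = int Q * (b * y)"
    by (simp add: algebra_simps)
  \<comment> \<open>shift the Bezout solution by a multiple \<open>t\<close> of \<open>(Q, p)\<close> until both coordinates are nonnegative\<close>
  define t where "t = \<bar>b * x\<bar> + \<bar>b * y\<bar>"
  have "t \<ge> 0" unfolding t_def by simp
  then have "t \<le> int Q * t" "t \<le> int p * t"
    using assms(2,3) by (simp_all add: mult_le_cancel_right1)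
  then have n0: "- b * x + int Q * t \<ge> 0" and j0: "b * y + int p * t \<ge> 0"
    using abs_ge_self[of "b * x"] abs_ge_minus_self[of "b * y"] unfolding t_def by linarith+
  have "(- b * x + int Q * t) * int p + b = int Q * (b * y + int p * t)"
    using base by (simp add: algebra_simps)
  then have "int (nat (- b * x + int Q * t)) * int p + b = int Q * int (nat (b * y + int p * t))"
    using n0 j0 by simp
  then show ?thesis by blast
qed

lemma fpath_exists:
  assumes "coprime p q" "p > 0" "q > 0"
  shows "\<exists>n. fpath p q n w"
proof -
  \<comment> \<open>induction needs the start states of \<open>w\<close> to contain a full residue class modulo \<open>q ^ length w\<close>\<close>
  have "\<exists>n. \<forall>k. fpath p q (n + q ^ length w * k) w"
  proof (induction w)
    case Nil
    then show ?case by simp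
  next
    case (Cons a w)
    then obtain m where m: "\<forall>k. fpath p q (m + q ^ length w * k) w" by blast
    define Q where "Q = q ^ Suc (length w)"
    have "coprime p Q" "Q > 0" using assms unfolding Q_def by simp_all
    then obtain n j :: nat where nj: "int n * int p + (a - int q * int m) = int Q * int j"
      using coprime_nat_multiple assms(2) by blast
    have "trans p q (n + Q * k) a (m + q ^ length w * (j + k * p))" for k
      using nj unfolding trans_def Q_def by (simp add: algebra_simps)
    then have "\<forall>k. fpath p q (n + Q * k) (a # w)" using m by auto
    then show ?case unfolding Q_def by auto
  qed
  then show ?thesis by (metis add_0_right mult_0_right)
qed

theorem mainTheorem8:
  fixes p q :: nat and u :: "int list"
  assumes "q > 1" and "p > q" and "coprime p q"
    and "accepted_hat p q u"
  shows "\<exists>n::nat. \<forall>i < length u. u ! i = spanword p q n i"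
proof -
  have q0: "q > 0" and p0: "p > 0" and lo: "int p - int q \<ge> 0" using assms(1,2) by auto
  obtain e where e0: "e 0 = 0" and e: "\<forall>i<length u. trans p q (e i) (u ! i) (e (Suc i))"
    using assms(4) fpath_imp_states unfolding accepted_hat_def by blast
  have u_in_B: "\<forall>i<length u. u ! i \<in> B p q"
    using assms(4) unfolding accepted_hat_def by auto
  define w where "w i = max 0 (int p - int q - u ! i)" for i
  obtain n where "fpath p q n (map w [0..<length u])"
    using fpath_exists[OF assms(3) p0 q0] by blast
  then obtain t where t0: "t 0 = n" and t: "\<forall>i<length u. trans p q (t i) (w i) (t (Suc i))"
    using fpath_imp_states by fastforce
  have window_letters: "w i \<in> {0..<0 + int q}" "w i + u ! i \<in> {int p - int q..<(int p - int q) + int q}"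
    if "i < length u" for i
    using u_in_B that unfolding w_def B_def by auto
  have "\<forall>i<length u. minword p q n i = w i"
    using window_word_eq_path_label[OF q0 order_refl t0 t] window_letters
    unfolding minword_eq_window_word[OF q0] by blast
  moreover have "\<forall>i<length u. maxword p q n i = w i + u ! i"
  proof -
    have "\<forall>i<length u. trans p q (t i + e i) (w i + u ! i) (t (Suc i) + e (Suc i))"
      using t e trans_add by blast
    then show ?thesis
      using window_word_eq_path_label[OF q0 lo, of "\<lambda>i. t i + e i"] t0 e0 window_letters
      unfolding maxword_eq_window_word[OF q0 less_imp_le[OF assms(2)]] by auto
  qed
  ultimately show ?thesis unfolding spanword_def by (intro exI[of _ n]) auto
qed

end
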